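(* Let $\mathcal M=\langle\mathbb R,<,+,\ldots\rangle$ be an o-minimal structure and let $\mathcal H$ be an SHS defined in $\mathcal M$ such that: (a) for every state $s$, if $I(s)$ is finite then $\mu_s$ is equivalent to the uniform discrete distribution on $I(s)$, and if $I(s)$ is infinite then $\mu_s$ is equivalent to the Lebesgue measure on $I(s)$; (b) for every edge $e$ and $\mathbf v\in\mathbb R^n$, $\mathcal R_e(\mathbf v)$ is either finite or has positive Lebesgue measure, and $\eta_e(\mathbf v)$ is respectively equivalent to the discrete (counting) measure on $\mathcal R_e(\mathbf v)$ or to the Lebesgue measure on $\mathcal R_e(\mathbf v)$. Then for every location $\ell$ and every set $D\subseteq\mathbb R^n$ definable in $\mathcal M$, the set $\mathrm{Pre}^{\mathcal T_{\mathcal H}}(\{\ell\}\times D)$ is definable in $\mathcal M$.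
   Context: Stochastic hybrid system (SHS) with $n$ variables: finite set $L$ of locations; finite set $E$ of edges $e=(\ell,a,\ell')$; for each $\ell$ an invariant $\mathrm{Inv}(\ell)\subseteq\mathbb R^n$ and flow $\gamma_\ell:\mathbb R^n\times\mathbb R^+\to\mathbb R^n$; for each edge $e$ a guard $\mathcal G(e)\subseteq\mathbb R^n$ and reset map $\mathbf v\mapsto\mathcal R_e(\mathbf v)\subseteq\mathbb R^n$. States $S_{\mathcal H}=L\times\mathbb R^n$; $s+\tau=(\ell,\gamma_\ell(\mathbf v,\tau))$ for $s=(\ell,\mathbf v)$; $e$ enabled in $(\ell,\mathbf v)$ if $\mathbf v\in\mathcal G(e)$; $I(s,e)=\{\tau\ge0:\gamma_\ell(\mathbf v,\tau')\in\mathrm{Inv}(\ell)\ \forall\tau'\in[0,\tau],\ \gamma_\ell(\mathbf v,\tau)\in\mathcal G(e)\}$, $I(s)=\bigcup_eI(s,e)$ (assumed nonempty). Probabilistic data: delay distributions $\mu_s$ with $\mu_s(I(s))=1$; edge distributions $w_{s'}$ positive exactly on the edges enabled in $s'$; reset distributions $\eta_e(\mathbf v)$ with $\eta_e(\mathbf v)(\mathcal R_e(\mathbf v))=1$. The STS $\mathcal T_{\mathcal H}$ has kernel $\kappa((\ell,\mathbf v),\{\ell'\}\times D)=\int\sum_{e=(\ell,a,\ell')}w_{s+\tau}(e)\,\eta_e(\gamma_\ell(\mathbf v,\tau))(D)\,d\mu_s(\tau)$. $\mathrm{Pre}^{\mathcal T_{\mathcal H}}(X)=\{s\in S_{\mathcal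 H}:\kappa(s,X)>0\}$. Two measures are equivalent on a set $A$ if they assign positive measure to exactly the same measurable subsets of $A$. $\mathcal H$ is defined in $\mathcal M$ if each $\gamma_\ell$, $\mathrm{Inv}(\ell)$, $\mathcal G(e)$ is definable (without parameters) in $\mathcal M$ and each reset relation $\{(\mathbf v,\mathbf v'):\mathbf v'\in\mathcal R_e(\mathbf v)\}$ is definable. A structure $\langle\mathbb R,<,\ldots\rangle$ is o-minimal if every definable subset of $\mathbb R$ is a finite union of points and open intervals. *)

theory Defs
  imports "HOL-Probability.Probability"
begin

text \<open>A first-order structure M = (R, <, +, ...) is represented by the family of its
  parameter-free definable sets: S k is the collection of definable subsets of R^k,
  points of R^k being lists of length k.  Such families are exactly the collections
  closed under boolean operations, cylinders, diagonals and projections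
  (van den Dries), containing the graphs of < and +.\<close>

definition real_structure :: "(nat \<Rightarrow> real list set set) \<Rightarrow> bool" where
  "real_structure S \<longleftrightarrow>
     (\<forall>k. \<forall>A\<in>S k. A \<subseteq> {xs. length xs = k}) \<and>
     (\<forall>k. {} \<in> S k) \<and>
     (\<forall>k. \<forall>A\<in>S k. {xs. length xs = k} - A \<in> S k) \<and>
     (\<forall>k. \<forall>A\<in>S k. \<forall>B\<in>S k. A \<union> B \<in> S k) \<and>
     (\<forall>k. \<forall>A\<in>S k. {xs @ [x] |xs x. xs \<in> A} \<in> S (Suc k)) \<and>
     (\<forall>k. \<forall>A\<in>S k. {x # xs |x xs. xs \<in> A} \<in> S (Suc k)) \<and>
     (\<forall>k i j. i < k \<longrightarrow> j < k \<longrightarrow> {xs. length xs = k \<and> xs ! i = xs ! j} \<in> S k) \<and>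
     (\<forall>k. \<forall>A\<in>S (Suc k). take k ` A \<in> S k) \<and>
     {[x, y] |x y. x < y} \<in> S 2 \<and>
     {[x, y, z] |x y z. x + y = z} \<in> S 3"

definition fin_union_pts_intervals :: "real set \<Rightarrow> bool" where
  "fin_union_pts_intervals X \<longleftrightarrow>
     (\<exists>P J. finite P \<and> finite (J :: (ereal \<times> ereal) set) \<and>
        X = P \<union> (\<Union>(a, b)\<in>J. {x. a < ereal x \<and> ereal x < b}))"

text \<open>O-minimality: every subset of R definable (with parameters) is a finite union
  of points and open intervals.  Sets definable with parameters are the fibres of
  parameter-free definable sets.\<close>
definition o_minimal :: "(nat \<Rightarrow> real list set set) \<Rightarrow> bool" where
  "o_minimal S \<longleftrightarrow> real_structure S \<and>
     (\<forall>m. \<forall>A\<in>S (Suc m). \<forall>p. length p = m \<longrightarrow> fin_union_pts_intervals {x. x # p \<in> A})"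

definition vlist :: "real ^ 'n::enum \<Rightarrow> real list" where
  "vlist v = map (\<lambda>i. v $ i) enum_class.enum"

definition definable :: "(nat \<Rightarrow> real list set set) \<Rightarrow> (real ^ 'n::enum) set \<Rightarrow> bool" where
  "definable S A \<longleftrightarrow> vlist ` A \<in> S CARD('n::enum)"

definition definable_states ::
    "(nat \<Rightarrow> real list set set) \<Rightarrow> ('l \<times> (real ^ 'n::enum)) set \<Rightarrow> bool" where
  "definable_states S X \<longleftrightarrow> (\<forall>l. definable S {v. (l, v) \<in> X})"

definition src :: "'l \<times> 'a \<times> 'l \<Rightarrow> 'l" where "src e = fst e"
definition tgt :: "'l \<times> 'a \<times> 'l \<Rightarrow> 'l" where "tgt e = snd (snd e)"

definition enabled ::
    "('l \<times> 'a \<times> 'l) set \<Rightarrow> (('l \<times> 'a \<times> 'l) \<Rightarrow> 'v set) \<Rightarrow> 'l \<times> 'a \<times> 'l \<Rightarrow> 'l \<times> 'v \<Rightarrow> bool" where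
  "enabled E G e s \<longleftrightarrow> e \<in> E \<and> src e = fst s \<and> snd s \<in> G e"

definition I_edge ::
    "('l \<Rightarrow> 'v set) \<Rightarrow> ('l \<Rightarrow> 'v \<Rightarrow> real \<Rightarrow> 'v) \<Rightarrow> (('l \<times> 'a \<times> 'l) \<Rightarrow> 'v set)
      \<Rightarrow> 'l \<times> 'v \<Rightarrow> 'l \<times> 'a \<times> 'l \<Rightarrow> real set" where
  "I_edge Inv \<gamma> G s e = {\<tau>. 0 \<le> \<tau> \<and> (\<forall>\<tau>'\<in>{0..\<tau>}. \<gamma> (fst s) (snd s) \<tau>' \<in> Inv (fst s))
                              \<and> \<gamma> (fst s) (snd s) \<tau> \<in> G e}"

definition I_state ::
    "('l \<times> 'a \<times> 'l) set \<Rightarrow> ('l \<Rightarrow> 'v set) \<Rightarrow> ('l \<Rightarrow> 'v \<Rightarrow> real \<Rightarrow> 'v) \<Rightarrow> (('l \<times> 'a \<times> 'l) \<Rightarrow> 'v set)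
      \<Rightarrow> 'l \<times> 'v \<Rightarrow> real set" where
  "I_state E Inv \<gamma> G s = (\<Union>e\<in>{e\<in>E. src e = fst s}. I_edge Inv \<gamma> G s e)"

definition kernel_integrand ::
    "('l \<times> 'a \<times> 'l) set \<Rightarrow> ('l \<Rightarrow> 'v \<Rightarrow> real \<Rightarrow> 'v)
      \<Rightarrow> ('l \<times> 'v \<Rightarrow> ('l \<times> 'a \<times> 'l) \<Rightarrow> real) \<Rightarrow> (('l \<times> 'a \<times> 'l) \<Rightarrow> 'v \<Rightarrow> 'v measure)
      \<Rightarrow> 'l \<times> 'v \<Rightarrow> 'l \<Rightarrow> 'v set \<Rightarrow> real \<Rightarrow> ennreal" where
  "kernel_integrand E \<gamma> w \<eta> s l' D \<tau> =
     (\<Sum>e\<in>{e\<in>E. src e = fst s \<and> tgt e = l'}.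
        ennreal (w (fst s, \<gamma> (fst s) (snd s) \<tau>) e) * emeasure (\<eta> e (\<gamma> (fst s) (snd s) \<tau>)) D)"

definition shs_kernel ::
    "('l \<times> 'a \<times> 'l) set \<Rightarrow> ('l \<Rightarrow> 'v \<Rightarrow> real \<Rightarrow> 'v) \<Rightarrow> ('l \<times> 'v \<Rightarrow> real measure)
      \<Rightarrow> ('l \<times> 'v \<Rightarrow> ('l \<times> 'a \<times> 'l) \<Rightarrow> real) \<Rightarrow> (('l \<times> 'a \<times> 'l) \<Rightarrow> 'v \<Rightarrow> 'v measure)
      \<Rightarrow> 'l \<times> 'v \<Rightarrow> 'l \<Rightarrow> 'v set \<Rightarrow> ennreal" where
  "shs_kernel E \<gamma> \<mu> w \<eta> s l' D = (\<integral>\<^sup>+ \<tau>. kernel_integrand E \<gamma> w \<eta> s l' D \<tau> \<partial>\<mu> s)"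

definition Pre ::
    "('l \<times> 'a \<times> 'l) set \<Rightarrow> ('l \<Rightarrow> 'v \<Rightarrow> real \<Rightarrow> 'v) \<Rightarrow> ('l \<times> 'v \<Rightarrow> real measure)
      \<Rightarrow> ('l \<times> 'v \<Rightarrow> ('l \<times> 'a \<times> 'l) \<Rightarrow> real) \<Rightarrow> (('l \<times> 'a \<times> 'l) \<Rightarrow> 'v \<Rightarrow> 'v measure)
      \<Rightarrow> 'l \<Rightarrow> 'v set \<Rightarrow> ('l \<times> 'v) set" where
  "Pre E \<gamma> \<mu> w \<eta> l' D = {s. shs_kernel E \<gamma> \<mu> w \<eta> s l' D > 0}"

text \<open>Well-formedness of an SHS with its probabilistic data.  The last clause is the
  measurability of the integrand, needed for the kernel formula to make sense.\<close>
definition is_shs ::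
    "('l \<times> 'a \<times> 'l) set \<Rightarrow> ('l \<Rightarrow> (real ^ 'n) set) \<Rightarrow> ('l \<Rightarrow> real ^ 'n \<Rightarrow> real \<Rightarrow> real ^ 'n)
     \<Rightarrow> (('l \<times> 'a \<times> 'l) \<Rightarrow> (real ^ 'n) set) \<Rightarrow> (('l \<times> 'a \<times> 'l) \<Rightarrow> real ^ 'n \<Rightarrow> (real ^ 'n) set)
     \<Rightarrow> ('l \<times> (real ^ 'n) \<Rightarrow> real measure) \<Rightarrow> ('l \<times> (real ^ 'n) \<Rightarrow> ('l \<times> 'a \<times> 'l) \<Rightarrow> real)
     \<Rightarrow> (('l \<times> 'a \<times> 'l) \<Rightarrow> real ^ 'n \<Rightarrow> (real ^ 'n) measure) \<Rightarrow> bool" where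
  "is_shs E Inv \<gamma> G R \<mu> w \<eta> \<longleftrightarrow>
     finite E \<and>
     (\<forall>s. I_state E Inv \<gamma> G s \<noteq> {}) \<and>
     (\<forall>s. prob_space (\<mu> s) \<and> sets (\<mu> s) = sets borel \<and> emeasure (\<mu> s) (I_state E Inv \<gamma> G s) = 1) \<and>
     (\<forall>s e. 0 \<le> w s e \<and> (0 < w s e \<longleftrightarrow> enabled E G e s)) \<and>
     (\<forall>s. (\<exists>e. enabled E G e s) \<longrightarrow> (\<Sum>e\<in>E. w s e) = 1) \<and>
     (\<forall>e\<in>E. \<forall>v. prob_space (\<eta> e v) \<and> sets (\<eta> e v) = sets borel \<and> emeasure (\<eta> e v) (R e v) = 1) \<and>
     (\<forall>s l' D. D \<in> sets borel \<longrightarrow> kernel_integrand E \<gamma> w \<eta> s l' D \<in> borel_measurable borel)"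

definition shs_defined_in ::
    "(nat \<Rightarrow> real list set set) \<Rightarrow> ('l \<times> 'a \<times> 'l) set \<Rightarrow> ('l \<Rightarrow> (real ^ ('n::enum)) set)
     \<Rightarrow> ('l \<Rightarrow> real ^ 'n::enum \<Rightarrow> real \<Rightarrow> real ^ 'n::enum) \<Rightarrow> (('l \<times> 'a \<times> 'l) \<Rightarrow> (real ^ 'n::enum) set)
     \<Rightarrow> (('l \<times> 'a \<times> 'l) \<Rightarrow> real ^ 'n::enum \<Rightarrow> (real ^ 'n::enum) set) \<Rightarrow> bool" where
  "shs_defined_in S E Inv \<gamma> G R \<longleftrightarrow>
     (\<forall>l. {vlist v @ [t] @ vlist (\<gamma> l v t) |v t. 0 \<le> t} \<in> S (2 * CARD('n::enum) + 1)) \<and>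
     (\<forall>l. definable S (Inv l)) \<and>
     (\<forall>e\<in>E. definable S (G e)) \<and>
     (\<forall>e\<in>E. {vlist v @ vlist v' |v v'. v' \<in> R e v} \<in> S (2 * CARD('n::enum)))"

definition equiv_on :: "'a measure \<Rightarrow> 'a measure \<Rightarrow> 'a set \<Rightarrow> bool" where
  "equiv_on M N A \<longleftrightarrow>
     (\<forall>B. B \<in> sets M \<longrightarrow> B \<in> sets N \<longrightarrow> B \<subseteq> A \<longrightarrow> (0 < emeasure M B \<longleftrightarrow> 0 < emeasure N B))"

end

(*
  A state (l, v) lies in Pre({l'} x D) iff the delay measure charges the set T of delays t at
  which some edge from l to l' is enabled and has a reset measure charging D.  Each delay and
  reset measure is equivalent, on its support, to counting or to Lebesgue measure, so each
  positivity condition is either nonemptiness, which is first-order, or positive Lebesgue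
  measure.  In an o-minimal structure a definable subset of R has positive measure iff it
  contains an interval, which is first-order again; Tonelli's theorem reduces positive measure
  of definable families of subsets of R^n to this one-dimensional case, one coordinate at a time.
*)

theory Submission
  imports Defs
begin

section \<open>Definable relations\<close>

definition definable_rel :: "(nat \<Rightarrow> real list set set) \<Rightarrow> nat \<Rightarrow> (real list \<Rightarrow> bool) \<Rightarrow> bool" where
  "definable_rel S k P \<longleftrightarrow> {xs. length xs = k \<and> P xs} \<in> S k"

lemma definable_rel_cong:
  assumes "definable_rel S k P" "\<And>xs. length xs = k \<Longrightarrow> P xs = Q xs"
  shows "definable_rel S k Q"
proof -
  have "{xs. length xs = k \<and> P xs} = {xs. length xs = k \<and> Q xs}" using assms(2) by auto
  then show ?thesis using assms(1) by (simp add: definable_rel_def)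
qed

definition has_interval :: "real set \<Rightarrow> bool" where
  "has_interval X \<longleftrightarrow> (\<exists>a b. a < b \<and> {a<..<b} \<subseteq> X)"

lemma
  assumes "real_structure S"
  shows real_structure_subset: "A \<in> S k \<Longrightarrow> A \<subseteq> {xs. length xs = k}"
    and real_structure_empty: "{} \<in> S k"
    and real_structure_compl: "A \<in> S k \<Longrightarrow> {xs. length xs = k} - A \<in> S k"
    and real_structure_union: "A \<in> S k \<Longrightarrow> B \<in> S k \<Longrightarrow> A \<union> B \<in> S k"
    and real_structure_cons: "A \<in> S k \<Longrightarrow> {x # xs |x xs. xs \<in> A} \<in> S (Suc k)"
    and real_structure_diag: "i < k \<Longrightarrow> j < k \<Longrightarrow> {xs. length xs = k \<and> xs ! i = xs ! j} \<in> S k"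
    and real_structure_take: "A \<in> S (Suc k) \<Longrightarrow> take k ` A \<in> S k"
    and real_structure_less: "{[x, y] |x y. x < y} \<in> S 2"
    and real_structure_plus: "{[x, y, z] |x y z. x + y = z} \<in> S 3"
  using assms[unfolded real_structure_def]
  by (simp_all only: Ball_def)

locale real_structure_sets =
  fixes S :: "nat \<Rightarrow> real list set set"
  assumes real_structure: "real_structure S"
begin

lemma definable_rel_mem: "A \<in> S k \<Longrightarrow> definable_rel S k (\<lambda>xs. xs \<in> A)"
proof -
  assume A: "A \<in> S k"
  then have "{xs. length xs = k \<and> xs \<in> A} = A" using real_structure_subset[OF real_structure] by blast
  then show ?thesis using A by (simp add: definable_rel_def)
qed

lemma definable_rel_False: "definable_rel S k (\<lambda>_. False)"
  using real_structure_empty[OF real_structure] by (simp add: definable_rel_def)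

lemma definable_rel_not: "definable_rel S k P \<Longrightarrow> definable_rel S k (\<lambda>xs. \<not> P xs)"
proof -
  assume "definable_rel S k P"
  then have "{xs. length xs = k} - {xs. length xs = k \<and> P xs} \<in> S k"
    unfolding definable_rel_def by (rule real_structure_compl[OF real_structure])
  moreover have "{xs. length xs = k} - {xs. length xs = k \<and> P xs} = {xs. length xs = k \<and> \<not> P xs}"
    by auto
  ultimately show ?thesis by (simp add: definable_rel_def)
qed

lemma definable_rel_True: "definable_rel S k (\<lambda>_. True)"
  using definable_rel_not[OF definable_rel_False] by simp

lemma definable_rel_disj:
  "definable_rel S k P \<Longrightarrow> definable_rel S k Q \<Longrightarrow> definable_rel S k (\<lambda>xs. P xs \<or> Q xs)"
proof -
  assume "definable_rel S k P" "definable_rel S k Q"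
  then have "{xs. length xs = k \<and> P xs} \<union> {xs. length xs = k \<and> Q xs} \<in> S k"
    unfolding definable_rel_def by (rule real_structure_union[OF real_structure])
  moreover have "{xs. length xs = k \<and> P xs} \<union> {xs. length xs = k \<and> Q xs} =
      {xs. length xs = k \<and> (P xs \<or> Q xs)}"
    by auto
  ultimately show ?thesis by (simp add: definable_rel_def)
qed

lemma definable_rel_conj:
  "definable_rel S k P \<Longrightarrow> definable_rel S k Q \<Longrightarrow> definable_rel S k (\<lambda>xs. P xs \<and> Q xs)"
  using definable_rel_not[OF definable_rel_disj[OF definable_rel_not definable_rel_not]] by simp

lemma definable_rel_imp:
  "definable_rel S k P \<Longrightarrow> definable_rel S k Q \<Longrightarrow> definable_rel S k (\<lambda>xs. P xs \<longrightarrow> Q xs)"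
  using definable_rel_disj[OF definable_rel_not] by simp

lemma definable_rel_Bex_finite:
  assumes "finite F" "\<And>e. e \<in> F \<Longrightarrow> definable_rel S k (P e)"
  shows "definable_rel S k (\<lambda>xs. \<exists>e\<in>F. P e xs)"
  using assms
proof (induction F rule: finite_induct)
  case empty
  then show ?case using definable_rel_False by simp
next
  case (insert x F)
  then have "definable_rel S k (\<lambda>xs. P x xs \<or> (\<exists>e\<in>F. P e xs))" by (intro definable_rel_disj) auto
  then show ?case by (rule definable_rel_cong) auto
qed

lemma definable_rel_ex_last:
  assumes "definable_rel S (Suc k) P"
  shows "definable_rel S k (\<lambda>xs. \<exists>x. P (xs @ [x]))"
proof -
  have "take k ` {xs. length xs = Suc k \<and> P xs} \<in> S k"
    using assms unfolding definable_rel_def by (rule real_structure_take[OF real_structure])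
  moreover have "take k ` {xs. length xs = Suc k \<and> P xs} = {xs. length xs = k \<and> (\<exists>x. P (xs @ [x]))}"
    by (force simp: length_Suc_conv_rev)
  ultimately show ?thesis by (simp add: definable_rel_def)
qed

lemma definable_rel_all_last:
  assumes "definable_rel S (Suc k) P"
  shows "definable_rel S k (\<lambda>xs. \<forall>x. P (xs @ [x]))"
  using definable_rel_not[OF definable_rel_ex_last[OF definable_rel_not[OF assms]]] by simp

lemma definable_rel_ex_suffix:
  "definable_rel S (k + j) P \<Longrightarrow> definable_rel S k (\<lambda>xs. \<exists>ys. length ys = j \<and> P (xs @ ys))"
proof (induction j arbitrary: P)
  case 0
  then show ?case by (auto elim: definable_rel_cong)
next
  case (Suc j)
  then have "definable_rel S (k + j) (\<lambda>xs. \<exists>x. P (xs @ [x]))"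
    by (intro definable_rel_ex_last) simp
  then have "definable_rel S k (\<lambda>xs. \<exists>ys. length ys = j \<and> (\<exists>x. P ((xs @ ys) @ [x])))"
    by (rule Suc.IH)
  then show ?case
    by (rule definable_rel_cong) (metis append_assoc length_Suc_conv_rev)
qed

lemma definable_rel_eq_nth: "i < k \<Longrightarrow> j < k \<Longrightarrow> definable_rel S k (\<lambda>xs. xs ! i = xs ! j)"
  unfolding definable_rel_def by (rule real_structure_diag[OF real_structure])

lemma definable_rel_drop:
  "A \<in> S m \<Longrightarrow> definable_rel S (j + m) (\<lambda>xs. drop j xs \<in> A)"
proof (induction j)
  case 0
  then show ?case using definable_rel_mem by simp
next
  case (Suc j)
  then have "{xs. length xs = j + m \<and> drop j xs \<in> A} \<in> S (j + m)"
    by (simp add: definable_rel_def)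
  then have "{x # xs |x xs. xs \<in> {xs. length xs = j + m \<and> drop j xs \<in> A}} \<in> S (Suc (j + m))"
    by (rule real_structure_cons[OF real_structure])
  moreover have "{x # xs |x xs. xs \<in> {xs. length xs = j + m \<and> drop j xs \<in> A}} =
      {xs. length xs = Suc j + m \<and> drop (Suc j) xs \<in> A}"
    by (force simp: length_Suc_conv)
  ultimately show ?case by (simp add: definable_rel_def)
qed

text \<open>The substituted coordinates are guessed as a suffix and tied to the old ones by diagonals.\<close>

lemma definable_rel_subst:
  assumes P: "definable_rel S j P" and idx: "length idx = j" "\<forall>i\<in>set idx. i < k"
  shows "definable_rel S k (\<lambda>xs. P (map ((!) xs) idx))"
proof -
  let ?A = "{xs. length xs = j \<and> P xs}"
  have diags: "definable_rel S (k + j) (\<lambda>zs. \<forall>p<q. zs ! (k + p) = zs ! (idx ! p))" if "q \<le> j" for q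
    using that
  proof (induction q)
    case 0
    then show ?case using definable_rel_True by simp
  next
    case (Suc q)
    then have "idx ! q < k" using idx by simp
    then have "definable_rel S (k + j) (\<lambda>zs. (\<forall>p<q. zs ! (k + p) = zs ! (idx ! p)) \<and> zs ! (k + q) = zs ! (idx ! q))"
      using Suc by (intro definable_rel_conj definable_rel_eq_nth) auto
    then show ?case by (rule definable_rel_cong) (auto simp: less_Suc_eq)
  qed
  have "definable_rel S (k + j) (\<lambda>zs. drop k zs \<in> ?A \<and> (\<forall>p<j. zs ! (k + p) = zs ! (idx ! p)))"
    using P by (intro definable_rel_conj definable_rel_drop diags) (auto simp: definable_rel_def)
  then have "definable_rel S k (\<lambda>xs. \<exists>ys. length ys = j \<and>
      drop k (xs @ ys) \<in> ?A \<and> (\<forall>p<j. (xs @ ys) ! (k + p) = (xs @ ys) ! (idx ! p)))"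
    by (rule definable_rel_ex_suffix)
  then show ?thesis
  proof (rule definable_rel_cong)
    fix xs :: "real list" assume lx: "length xs = k"
    have nth_idx: "(xs @ ys) ! (idx ! p) = xs ! (idx ! p)" if "p < j" for ys p
      using idx that lx by (simp add: nth_append)
    have "ys = map ((!) xs) idx"
      if "length ys = j" "\<forall>p<j. (xs @ ys) ! (k + p) = (xs @ ys) ! (idx ! p)" for ys
      using that idx lx nth_idx by (intro nth_equalityI) auto
    then show "(\<exists>ys. length ys = j \<and> drop k (xs @ ys) \<in> ?A \<and>
        (\<forall>p<j. (xs @ ys) ! (k + p) = (xs @ ys) ! (idx ! p))) = P (map ((!) xs) idx)"
      using idx lx nth_idx by (auto intro!: exI[of _ "map ((!) xs) idx"])
  qed
qed

lemma definable_rel_less_nth: "i < k \<Longrightarrow> j < k \<Longrightarrow> definable_rel S k (\<lambda>xs. xs ! i < xs ! j)"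
proof -
  assume ij: "i < k" "j < k"
  have "definable_rel S 2 (\<lambda>xs. xs \<in> {[x, y] |x y. x < y})"
    by (intro definable_rel_mem real_structure_less[OF real_structure])
  then have "definable_rel S k (\<lambda>xs. map ((!) xs) [i, j] \<in> {[x, y] |x y. x < y})"
    by (rule definable_rel_subst) (use ij in auto)
  then show ?thesis by (rule definable_rel_cong) auto
qed

lemma definable_rel_le_nth: "i < k \<Longrightarrow> j < k \<Longrightarrow> definable_rel S k (\<lambda>xs. xs ! i \<le> xs ! j)"
  using definable_rel_not[OF definable_rel_less_nth, of j k i] by (simp add: not_less)

text \<open>0 \<le> x is expressed as \<exists>z. z + z = z \<and> z \<le> x.\<close>

lemma definable_rel_nonneg_nth: "i < k \<Longrightarrow> definable_rel S k (\<lambda>xs. 0 \<le> xs ! i)"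
proof -
  assume i: "i < k"
  have "definable_rel S 3 (\<lambda>xs. xs \<in> {[x, y, z] |x y z. x + y = z})"
    by (intro definable_rel_mem real_structure_plus[OF real_structure])
  then have "definable_rel S (Suc k) (\<lambda>ws. map ((!) ws) [k, k, k] \<in> {[x, y, z] |x y z. x + y = z})"
    by (rule definable_rel_subst) auto
  then have "definable_rel S (Suc k) (\<lambda>ws. map ((!) ws) [k, k, k] \<in> {[x, y, z] |x y z. x + y = z}
      \<and> ws ! k \<le> ws ! i)"
    using i by (intro definable_rel_conj definable_rel_le_nth) auto
  then have "definable_rel S k (\<lambda>xs. \<exists>z. map ((!) (xs @ [z])) [k, k, k] \<in> {[x, y, z] |x y z. x + y = z}
      \<and> (xs @ [z]) ! k \<le> (xs @ [z]) ! i)"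
    by (rule definable_rel_ex_last)
  then show ?thesis
    by (rule definable_rel_cong) (use i in \<open>auto simp: nth_append\<close>)
qed

lemma definable_rel_has_interval:
  assumes P: "definable_rel S (Suc m) P"
  shows "definable_rel S m (\<lambda>xs. has_interval {x. P (xs @ [x])})"
proof -
  let ?Q = "\<lambda>zs. zs ! m < zs ! (m + 1) \<and>
    (zs ! m < zs ! (m + 2) \<and> zs ! (m + 2) < zs ! (m + 1) \<longrightarrow> P (map ((!) zs) ([0..<m] @ [m + 2])))"
  have "definable_rel S (Suc (m + 2)) ?Q"
    by (intro definable_rel_conj definable_rel_imp definable_rel_less_nth definable_rel_subst[OF P]) auto
  then have "definable_rel S (m + 2) (\<lambda>zs. \<forall>x. ?Q (zs @ [x]))"
    by (rule definable_rel_all_last)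
  then have "definable_rel S m (\<lambda>xs. \<exists>ys. length ys = 2 \<and> (\<forall>x. ?Q ((xs @ ys) @ [x])))"
    by (rule definable_rel_ex_suffix)
  then show ?thesis
  proof (rule definable_rel_cong)
    fix xs :: "real list" assume lx: "length xs = m"
    have "map ((!) (xs @ [a, b, x])) ([0..<m] @ [m + 2]) = xs @ [x]" for a b x
      using lx by (intro nth_equalityI) (auto simp: nth_append)
    then have "(\<forall>x. ?Q ((xs @ [a, b]) @ [x])) \<longleftrightarrow> a < b \<and> {a<..<b} \<subseteq> {x. P (xs @ [x])}" for a b
      using lx by (auto simp: nth_append)
    moreover have "(\<exists>ys. length ys = 2 \<and> R ys) \<longleftrightarrow> (\<exists>a b. R [a, b])" for R :: "real list \<Rightarrow> bool"
      by (auto simp: numeral_2_eq_2 length_Suc_conv)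
    ultimately show "(\<exists>ys. length ys = 2 \<and> (\<forall>x. ?Q ((xs @ ys) @ [x]))) = has_interval {x. P (xs @ [x])}"
      unfolding has_interval_def by simp
  qed
qed


lemma definable_rel_all_below_last:
  assumes P: "definable_rel S (Suc k) P"
  shows "definable_rel S (Suc k) (\<lambda>zs. \<forall>x. 0 \<le> x \<and> x \<le> zs ! k \<longrightarrow> P (take k zs @ [x]))"
proof -
  have "definable_rel S (Suc (Suc k)) (\<lambda>ws. 0 \<le> ws ! Suc k \<and> ws ! Suc k \<le> ws ! k \<longrightarrow>
      P (map ((!) ws) ([0..<k] @ [Suc k])))"
    by (intro definable_rel_imp definable_rel_conj definable_rel_nonneg_nth definable_rel_le_nth
        definable_rel_subst[OF P]) auto
  then have "definable_rel S (Suc k) (\<lambda>zs. \<forall>x. 0 \<le> (zs @ [x]) ! Suc k \<and> (zs @ [x]) ! Suc k \<le> (zs @ [x]) ! k \<longrightarrow>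
      P (map ((!) (zs @ [x])) ([0..<k] @ [Suc k])))"
    by (rule definable_rel_all_last)
  then show ?thesis
  proof (rule definable_rel_cong)
    fix zs :: "real list" assume lz: "length zs = Suc k"
    have "map ((!) (zs @ [x])) ([0..<k] @ [Suc k]) = take k zs @ [x]" for x
      using lz by (intro nth_equalityI) (auto simp: nth_append)
    then show "(\<forall>x. 0 \<le> (zs @ [x]) ! Suc k \<and> (zs @ [x]) ! Suc k \<le> (zs @ [x]) ! k \<longrightarrow>
        P (map ((!) (zs @ [x])) ([0..<k] @ [Suc k]))) =
        (\<forall>x. 0 \<le> x \<and> x \<le> zs ! k \<longrightarrow> P (take k zs @ [x]))"
      using lz by (simp add: nth_append)
  qed
qed

end

section \<open>Definable subsets of the line\<close>

lemma fin_union_pts_intervals_has_interval_or_finite: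
  assumes "fin_union_pts_intervals X"
  shows "has_interval X \<or> finite X"
proof -
  obtain P J where PJ: "finite P" "X = P \<union> (\<Union>(a, b)\<in>J. {x. a < ereal x \<and> ereal x < b})"
    using assms unfolding fin_union_pts_intervals_def by blast
  show ?thesis
  proof (cases "\<exists>(a, b)\<in>J. \<exists>x. a < ereal x \<and> ereal x < b")
    case True
    then obtain a b x where ab: "(a, b) \<in> J" "a < ereal x" "ereal x < b" by blast
    obtain a' where a': "a < ereal a'" "a' < x" using ereal_dense2[OF ab(2)] by auto
    obtain b' where b': "x < b'" "ereal b' < b" using ereal_dense2[OF ab(3)] by auto
    have "{a'<..<b'} \<subseteq> X"
      using PJ(2) ab(1) a' b' by (force intro: less_ereal.simps(1)[THEN iffD2] order.strict_trans)
    then show ?thesis using a' b' unfolding has_interval_def by (meson order.strict_trans)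
  next
    case False
    then have "X = P" using PJ(2) by auto
    then show ?thesis using PJ(1) by simp
  qed
qed

lemma fin_union_pts_intervals_borel:
  assumes "fin_union_pts_intervals X"
  shows "X \<in> sets borel"
proof -
  obtain P J where PJ: "finite P" "finite (J :: (ereal \<times> ereal) set)"
    "X = P \<union> (\<Union>(a, b)\<in>J. {x. a < ereal x \<and> ereal x < b})"
    using assms unfolding fin_union_pts_intervals_def by blast
  have "{x. a < ereal x \<and> ereal x < b} \<in> sets borel" for a b :: ereal
    by measurable
  then show ?thesis unfolding PJ(3) using PJ(1,2)
    by (intro sets.Un sets.finite_UN) (auto simp: borel_closed finite_imp_closed)
qed

lemma has_interval_infinite: "has_interval X \<Longrightarrow> infinite X"
  unfolding has_interval_def using infinite_Ioo finite_subset by blast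

lemma has_interval_emeasure_pos:
  assumes "has_interval X" "X \<in> sets borel"
  shows "0 < emeasure lborel X"
proof -
  obtain a b where ab: "a < b" "{a<..<b} \<subseteq> X" using assms(1) unfolding has_interval_def by blast
  have "emeasure lborel {a<..<b} \<le> emeasure lborel X"
    using ab(2) assms(2) by (intro emeasure_mono) auto
  then have "ennreal (b - a) \<le> emeasure lborel X"
    using ab(1) by simp
  then show ?thesis using ab(1) by (metis ennreal_eq_0_iff diff_gt_0_iff_gt not_le not_gr_zero order_less_le_trans)
qed

lemma fin_union_pts_intervals_infinite_iff:
  "fin_union_pts_intervals X \<Longrightarrow> infinite X \<longleftrightarrow> has_interval X"
  using fin_union_pts_intervals_has_interval_or_finite has_interval_infinite by blast

lemma fin_union_pts_intervals_emeasure_pos_iff: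
  assumes "fin_union_pts_intervals X"
  shows "0 < emeasure lborel X \<longleftrightarrow> has_interval X"
  using fin_union_pts_intervals_has_interval_or_finite[OF assms]
    has_interval_emeasure_pos[OF _ fin_union_pts_intervals_borel[OF assms]]
  by (auto simp: emeasure_lborel_countable countable_finite)

lemma o_minimal_real_structure: "o_minimal S \<Longrightarrow> real_structure S"
  unfolding o_minimal_def by blast

locale o_minimal_sets =
  fixes S :: "nat \<Rightarrow> real list set set"
  assumes o_minimal: "o_minimal S"

sublocale o_minimal_sets \<subseteq> real_structure_sets
  by unfold_locales (rule o_minimal_real_structure[OF o_minimal])

context o_minimal_sets
begin

text \<open>O-minimality is stated for the first coordinate; a permutation moves it to the last one.\<close>

lemma o_minimal_fibre:
  assumes P: "definable_rel S (Suc m) P" and p: "length p = m"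
  shows "fin_union_pts_intervals {x. P (p @ [x])}"
proof -
  let ?idx = "[1..<Suc m] @ [0]"
  have "definable_rel S (Suc m) (\<lambda>ys. P (map ((!) ys) ?idx))"
    by (rule definable_rel_subst[OF P]) auto
  then have "{ys. length ys = Suc m \<and> P (map ((!) ys) ?idx)} \<in> S (Suc m)"
    by (simp add: definable_rel_def)
  then have "fin_union_pts_intervals {x. x # p \<in> {ys. length ys = Suc m \<and> P (map ((!) ys) ?idx)}}"
    using o_minimal p unfolding o_minimal_def by blast
  moreover have "map ((!) (x # p)) ?idx = p @ [x]" for x
  proof -
    have "[1..<Suc m] = map Suc [0..<m]" by (simp add: map_Suc_upt)
    then show ?thesis using p map_nth[of p] by (simp add: comp_def)
  qed
  ultimately show ?thesis using p by simp
qed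

end

section \<open>Measure of definable families\<close>

abbreviation lborel_fin :: "nat \<Rightarrow> (nat \<Rightarrow> real) measure" where
  "lborel_fin n \<equiv> PiM {..<n} (\<lambda>_. lborel)"

interpretation lborel_product: product_sigma_finite "\<lambda>_::nat. lborel :: real measure"
  unfolding product_sigma_finite_def by (simp add: lborel.sigma_finite_measure_axioms)

lemma lborel_fin_Suc_section:
  assumes Y: "Y \<in> sets (lborel_fin (Suc n))"
  shows "emeasure (lborel_fin (Suc n)) Y = (\<integral>\<^sup>+x. emeasure lborel {y. x(n := y) \<in> Y} \<partial>lborel_fin n)"
    and "(\<lambda>x. emeasure lborel {y. x(n := y) \<in> Y}) \<in> borel_measurable (lborel_fin n)"
proof -
  have ins: "{..<Suc n} = insert n {..<n}" by auto
  have Y': "indicator Y \<in> borel_measurable (PiM (insert n {..<n}) (\<lambda>_. lborel))"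
    using Y unfolding ins by simp
  have slice: "(\<integral>\<^sup>+y. indicator Y (x(n := y)) \<partial>lborel) = emeasure lborel {y. x(n := y) \<in> Y}"
    if "x \<in> space (lborel_fin n)" for x
  proof -
    have "(\<lambda>y. x(n := y)) \<in> measurable lborel (lborel_fin (Suc n))"
      unfolding ins using that by (intro measurable_component_update) auto
    then have "{y. x(n := y) \<in> Y} \<in> sets lborel"
      using measurable_sets[OF _ Y] by (metis (no_types) space_borel vimage_def Collect_mem_eq inf_top.right_neutral space_lborel)
    then show ?thesis
      using nn_integral_indicator[of "{y. x(n := y) \<in> Y}" lborel] by (simp add: indicator_def)
  qed
  have "emeasure (lborel_fin (Suc n)) Y = (\<integral>\<^sup>+x. indicator Y x \<partial>PiM (insert n {..<n}) (\<lambda>_. lborel))"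
    using Y by (simp add: ins)
  also have "\<dots> = (\<integral>\<^sup>+x. \<integral>\<^sup>+y. indicator Y (x(n := y)) \<partial>lborel \<partial>lborel_fin n)"
    by (rule lborel_product.product_nn_integral_insert) (use Y' in auto)
  also have "\<dots> = (\<integral>\<^sup>+x. emeasure lborel {y. x(n := y) \<in> Y} \<partial>lborel_fin n)"
    by (rule nn_integral_cong) (rule slice)
  finally show "emeasure (lborel_fin (Suc n)) Y = (\<integral>\<^sup>+x. emeasure lborel {y. x(n := y) \<in> Y} \<partial>lborel_fin n)" .
  have "(\<lambda>z. (fst z)(n := snd z)) \<in> measurable (lborel_fin n \<Otimes>\<^sub>M lborel) (lborel_fin (Suc n))"
    by (rule measurable_fun_upd[where J="{..<n}"]) (auto simp: ins)
  then have "(\<lambda>z. indicator Y ((fst z)(n := snd z))) \<in> borel_measurable (lborel_fin n \<Otimes>\<^sub>M lborel)"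
    using Y by (intro measurable_compose[OF _ borel_measurable_indicator])
  then have "(\<lambda>x. \<integral>\<^sup>+y. indicator Y (x(n := y)) \<partial>lborel) \<in> borel_measurable (lborel_fin n)"
    by (intro lborel.borel_measurable_nn_integral) (simp add: case_prod_beta')
  then show "(\<lambda>x. emeasure lborel {y. x(n := y) \<in> Y}) \<in> borel_measurable (lborel_fin n)"
    by (rule measurable_cong[THEN iffD1, rotated]) (simp add: slice)
qed

definition fibre_set :: "nat \<Rightarrow> (real list \<Rightarrow> bool) \<Rightarrow> real list \<Rightarrow> (nat \<Rightarrow> real) set" where
  "fibre_set n P p = {x \<in> space (lborel_fin n). P (p @ map x [0..<n])}"

lemma emeasure_fibre_set_0: "0 < emeasure (lborel_fin 0) (fibre_set 0 P p) \<longleftrightarrow> P p"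
proof -
  have "space (lborel_fin 0) = {\<lambda>_. undefined}" by (simp add: PiM_empty)
  then have "fibre_set 0 P p = (if P p then {\<lambda>_. undefined} else {})"
    unfolding fibre_set_def by auto
  then show ?thesis by (simp add: PiM_empty)
qed

text \<open>Induction on n: by Tonelli, a set in R^(n+1) has positive measure iff so has the set of
  x in R^n whose one-dimensional section has positive measure, and by o-minimality such a
  section has positive measure iff it contains an interval, a definable condition on x.\<close>

lemma (in o_minimal_sets) definable_rel_emeasure_fibre_set_pos:
  assumes P: "definable_rel S (m + n) P"
  shows "\<exists>Q. definable_rel S m Q \<and> (\<forall>p. length p = m \<longrightarrow> fibre_set n P p \<in> sets (lborel_fin n) \<longrightarrow>
           (Q p \<longleftrightarrow> 0 < emeasure (lborel_fin n) (fibre_set n P p)))"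
  using P
proof (induction n arbitrary: P)
  case 0
  then show ?case using emeasure_fibre_set_0 by auto
next
  case (Suc n)
  have P: "definable_rel S (Suc (m + n)) P" using Suc.prems by simp
  define P' where "P' zs \<longleftrightarrow> has_interval {y. P (zs @ [y])}" for zs
  have "definable_rel S (m + n) P'"
    unfolding P'_def by (rule definable_rel_has_interval[OF P])
  then obtain Q where Q: "definable_rel S m Q" "\<And>p. length p = m \<Longrightarrow>
      fibre_set n P' p \<in> sets (lborel_fin n) \<Longrightarrow> Q p \<longleftrightarrow> 0 < emeasure (lborel_fin n) (fibre_set n P' p)"
    using Suc.IH by blast
  have "Q p \<longleftrightarrow> 0 < emeasure (lborel_fin (Suc n)) (fibre_set (Suc n) P p)"
    if p: "length p = m" and Y: "fibre_set (Suc n) P p \<in> sets (lborel_fin (Suc n))" for p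
  proof -
    let ?g = "\<lambda>x. emeasure lborel {y. x(n := y) \<in> fibre_set (Suc n) P p}"
    have "x(n := y) \<in> space (lborel_fin (Suc n))" if "x \<in> space (lborel_fin n)" for x y
      using that by (auto simp: space_PiM PiE_iff extensional_def)
    then have g_eq: "?g x = emeasure lborel {y. P ((p @ map x [0..<n]) @ [y])}"
      if "x \<in> space (lborel_fin n)" for x
      using that unfolding fibre_set_def by (intro arg_cong[where f="emeasure lborel"]) auto
    have pos: "P' (p @ map x [0..<n]) \<longleftrightarrow> 0 < emeasure lborel {y. P ((p @ map x [0..<n]) @ [y])}" for x
      unfolding P'_def using p
      by (intro fin_union_pts_intervals_emeasure_pos_iff[symmetric] o_minimal_fibre[OF P]) simp
    have fibre: "fibre_set n P' p = {x \<in> space (lborel_fin n). ?g x \<noteq> 0}"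
      using g_eq pos by (auto simp: fibre_set_def[of n P'] zero_less_iff_neq_zero)
    have g: "?g \<in> borel_measurable (lborel_fin n)"
      by (rule lborel_fin_Suc_section(2)[OF Y])
    have "fibre_set n P' p \<in> sets (lborel_fin n)"
      unfolding fibre using g by measurable
    then have "Q p \<longleftrightarrow> 0 < emeasure (lborel_fin n) {x \<in> space (lborel_fin n). ?g x \<noteq> 0}"
      using Q(2)[OF p] unfolding fibre by simp
    also have "\<dots> \<longleftrightarrow> 0 < emeasure (lborel_fin (Suc n)) (fibre_set (Suc n) P p)"
      unfolding lborel_fin_Suc_section(1)[OF Y] using nn_integral_0_iff[OF g]
      by (simp add: zero_less_iff_neq_zero)
    finally show ?thesis .
  qed
  then show ?case using Q(1) by blast
qed

section \<open>Vectors as coordinate lists\<close>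

definition enum_index :: "'n::enum \<Rightarrow> nat" where
  "enum_index i = (THE j. j < CARD('n::enum) \<and> enum_class.enum ! j = i)"

lemma enum_index: "enum_index i < CARD('n::enum)" "enum_class.enum ! enum_index i = (i :: 'n::enum)"
proof -
  have "\<exists>!j. j < length (enum_class.enum :: 'n::enum list) \<and> enum_class.enum ! j = i"
    by (rule distinct_Ex1[OF enum_distinct]) (simp add: enum_UNIV)
  from theI'[OF this[folded card_UNIV_length_enum]]
  show "enum_index i < CARD('n::enum)" "enum_class.enum ! enum_index i = i"
    unfolding enum_index_def by simp_all
qed

lemma enum_index_nth: "j < CARD('n::enum) \<Longrightarrow> enum_index (enum_class.enum ! j :: 'n::enum) = j"
  using enum_index[of "enum_class.enum ! j :: 'n::enum"]
  by (simp add: nth_eq_iff_index_eq[OF enum_distinct] card_UNIV_length_enum)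

lemma all_enum_index_iff:
  "(\<forall>i::'n::enum. Q i (enum_index i)) \<longleftrightarrow> (\<forall>j<CARD('n::enum). Q (enum_class.enum ! j) j)"
  by (metis enum_index enum_index_nth)

definition vec_of_fun :: "(nat \<Rightarrow> real) \<Rightarrow> real ^ 'n::enum" where
  "vec_of_fun f = (\<chi> i. f (enum_index i))"

lemma length_vlist [simp]: "length (vlist (v :: real ^ 'n::enum)) = CARD('n::enum)"
  by (simp add: vlist_def card_UNIV_length_enum)

lemma vlist_nth: "j < CARD('n::enum) \<Longrightarrow> vlist (v :: real ^ 'n::enum) ! j = v $ enum_class.enum ! j"
  by (simp add: vlist_def card_UNIV_length_enum)

lemma vlist_vec_of_fun: "vlist (vec_of_fun f :: real ^ 'n::enum) = map f [0..<CARD('n::enum)]"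
  by (rule nth_equalityI) (auto simp: vlist_nth vec_of_fun_def enum_index_nth)

lemma vlist_inject [simp]: "vlist (v :: real ^ 'n::enum) = vlist w \<longleftrightarrow> v = w"
proof
  assume "vlist v = vlist w"
  then have "v $ i = w $ i" for i
    using arg_cong[of _ _ "\<lambda>xs. xs ! enum_index i"] enum_index[of i] by (metis vlist_nth)
  then show "v = w" by (simp add: vec_eq_iff)
qed simp

lemma vlist_append_inject [simp]:
  "vlist (v :: real ^ 'n::enum) @ xs = vlist w @ ys \<longleftrightarrow> v = w \<and> xs = ys"
  by (metis append_eq_append_conv length_vlist vlist_inject)

lemma vlist_surj: "length xs = CARD('n::enum) \<Longrightarrow> \<exists>v :: real ^ 'n::enum. vlist v = xs"
  using vlist_vec_of_fun[of "(!) xs"] by (metis map_nth)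

lemma definable_iff_definable_rel:
  assumes "\<And>v. v \<in> X \<longleftrightarrow> P (vlist v)"
  shows "definable S (X :: (real ^ 'n::enum) set) \<longleftrightarrow> definable_rel S CARD('n::enum) P"
proof -
  have "vlist ` X = {xs. length xs = CARD('n::enum) \<and> P xs}"
    using assms vlist_surj[where 'n='n] by force
  then show ?thesis unfolding definable_def definable_rel_def by simp
qed

lemma measurable_vec_of_fun:
  "(vec_of_fun :: (nat \<Rightarrow> real) \<Rightarrow> real ^ 'n::enum) \<in> borel_measurable (lborel_fin CARD('n::enum))"
proof (subst borel_measurable_euclidean_space, intro ballI)
  fix b :: "real ^ 'n::enum" assume "b \<in> Basis"
  then obtain i where b: "b = axis i 1" unfolding Basis_vec_def by auto
  have "(\<lambda>f. f (enum_index i)) \<in> borel_measurable (lborel_fin CARD('n::enum))"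
    using enum_index(1)[of i] by simp
  then show "(\<lambda>f. vec_of_fun f \<bullet> b) \<in> borel_measurable (lborel_fin CARD('n::enum))"
    by (simp add: b vec_of_fun_def cart_eq_inner_axis[symmetric])
qed

lemma lborel_vec_eq_distr:
  "(lborel :: (real ^ 'n::enum) measure) = distr (lborel_fin CARD('n::enum)) borel vec_of_fun"
proof (rule lborel_eqI)
  fix l u :: "real ^ 'n::enum" assume lu: "\<And>b. b \<in> Basis \<Longrightarrow> l \<bullet> b \<le> u \<bullet> b"
  then have lu': "l $ i \<le> u $ i" for i
    using lu[of "axis i 1"] by (auto simp: Basis_vec_def cart_eq_inner_axis)
  let ?I = "\<lambda>j. {l $ enum_class.enum ! j <..< u $ enum_class.enum ! j}"
  have "vec_of_fun -` box l u \<inter> space (lborel_fin CARD('n::enum)) = PiE {..<CARD('n::enum)} ?I"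
    using all_enum_index_iff[of "\<lambda>i j. l $ i < _ j \<and> _ j < u $ i"]
    by (auto simp: mem_box_cart vec_of_fun_def space_PiM PiE_def Pi_def)
  then have "emeasure (distr (lborel_fin CARD('n::enum)) borel vec_of_fun) (box l u) =
      (\<Prod>j<CARD('n::enum). emeasure lborel (?I j))"
    by (simp add: emeasure_distr[OF measurable_vec_of_fun] lborel_product.emeasure_PiM)
  also have "\<dots> = ennreal (\<Prod>j<CARD('n::enum). u $ enum_class.enum ! j - l $ enum_class.enum ! j)"
    using lu' by (simp add: prod_ennreal)
  also have "(\<Prod>j<CARD('n::enum). u $ enum_class.enum ! j - l $ enum_class.enum ! j) = (\<Prod>i\<in>UNIV. u $ i - l $ i)"
    by (rule prod.reindex_bij_witness[where i=enum_index and j="(!) enum_class.enum"])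
      (auto simp: enum_index enum_index_nth)
  also have "(\<Prod>i\<in>UNIV. u $ i - l $ i) = (\<Prod>b\<in>Basis. (u - l) \<bullet> b)"
    by (simp add: Basis_vec_def cart_eq_inner_axis axis_eq_axis prod.UNION_disjoint inner_diff_left)
  finally show "emeasure (distr (lborel_fin CARD('n::enum)) borel vec_of_fun) (box l u) = (\<Prod>b\<in>Basis. (u - l) \<bullet> b)" .
qed simp

lemma (in o_minimal_sets) definable_rel_emeasure_vec_fibre_pos:
  assumes P: "definable_rel S (m + CARD('n::enum)) P"
  shows "\<exists>Q. definable_rel S m Q \<and> (\<forall>p. length p = m \<longrightarrow> {x :: real ^ 'n::enum. P (p @ vlist x)} \<in> sets borel \<longrightarrow>
            (Q p \<longleftrightarrow> 0 < emeasure lborel {x :: real ^ 'n::enum. P (p @ vlist x)}))"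
proof -
  obtain Q where Q: "definable_rel S m Q" "\<And>p. length p = m \<Longrightarrow>
      fibre_set CARD('n::enum) P p \<in> sets (lborel_fin CARD('n::enum)) \<Longrightarrow>
      Q p \<longleftrightarrow> 0 < emeasure (lborel_fin CARD('n::enum)) (fibre_set CARD('n::enum) P p)"
    using definable_rel_emeasure_fibre_set_pos[OF P] by blast
  have "Q p \<longleftrightarrow> 0 < emeasure lborel X"
    if p: "length p = m" and X: "X \<in> sets borel" and X_def: "X = {x :: real ^ 'n::enum. P (p @ vlist x)}" for p X
  proof -
    have fibre: "fibre_set CARD('n::enum) P p = vec_of_fun -` X \<inter> space (lborel_fin CARD('n::enum))"
      unfolding fibre_set_def X_def by (auto simp: vlist_vec_of_fun)
    have "emeasure lborel X = emeasure (lborel_fin CARD('n::enum)) (fibre_set CARD('n::enum) P p)"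
      unfolding fibre by (subst lborel_vec_eq_distr) (rule emeasure_distr[OF measurable_vec_of_fun X])
    moreover have "fibre_set CARD('n::enum) P p \<in> sets (lborel_fin CARD('n::enum))"
      unfolding fibre by (rule measurable_sets[OF measurable_vec_of_fun X])
    ultimately show ?thesis using Q(2)[OF p] by simp
  qed
  then show ?thesis using Q(1) by blast
qed

section \<open>Definability of the predecessor operator\<close>

lemma emeasure_eq_inter_of_measure_one:
  assumes "prob_space M" "R \<in> sets M" "emeasure M R = 1" "D \<in> sets M"
  shows "emeasure M D = emeasure M (D \<inter> R)"
proof -
  interpret prob_space M by fact
  have "space M - R \<in> null_sets M"
    using assms emeasure_compl[of R M] by (auto simp: emeasure_space_1)
  then have "emeasure M (D - (space M - R)) = emeasure M D"
    using assms(4) by (rule emeasure_Diff_null_set)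
  moreover have "D - (space M - R) = D \<inter> R" using sets.sets_into_space[OF assms(4)] by auto
  ultimately show ?thesis by simp
qed

lemma equiv_on_count_space_emeasure_pos_iff:
  assumes "equiv_on M (count_space UNIV) A" "finite A" "B \<subseteq> A" "B \<in> sets M"
  shows "0 < emeasure M B \<longleftrightarrow> B \<noteq> {}"
  using assms finite_subset[OF assms(3,2)] unfolding equiv_on_def
  by (auto simp: emeasure_count_space_finite card_gt_0_iff)

lemma equiv_on_uniform_count_measure_emeasure_pos_iff:
  assumes "equiv_on M (uniform_count_measure A) A" "finite A" "B \<subseteq> A" "B \<in> sets M"
  shows "0 < emeasure M B \<longleftrightarrow> B \<noteq> {}"
proof -
  have "finite B" using assms(3,2) by (rule finite_subset)
  have "B \<noteq> {} \<Longrightarrow> A \<noteq> {}" using assms(3) by blast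
  then have "0 < emeasure (uniform_count_measure A) B \<longleftrightarrow> B \<noteq> {}"
    using assms(2,3) \<open>finite B\<close>
    by (auto simp: emeasure_uniform_count_measure zero_less_divide_iff card_gt_0_iff)
  then show ?thesis
    using assms unfolding equiv_on_def by (auto simp: sets_uniform_count_measure)
qed

locale definable_shs = o_minimal_sets S for S :: "nat \<Rightarrow> real list set set" +
  fixes E :: "('l::finite \<times> 'a \<times> 'l) set"
    and Inv :: "'l \<Rightarrow> (real ^ 'n::enum) set"
    and \<gamma> :: "'l \<Rightarrow> real ^ 'n::enum \<Rightarrow> real \<Rightarrow> real ^ 'n::enum"
    and G :: "('l \<times> 'a \<times> 'l) \<Rightarrow> (real ^ 'n::enum) set"
    and R :: "('l \<times> 'a \<times> 'l) \<Rightarrow> real ^ 'n::enum \<Rightarrow> (real ^ 'n::enum) set"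
    and \<mu> :: "'l \<times> (real ^ 'n::enum) \<Rightarrow> real measure"
    and w :: "'l \<times> (real ^ 'n::enum) \<Rightarrow> ('l \<times> 'a \<times> 'l) \<Rightarrow> real"
    and \<eta> :: "('l \<times> 'a \<times> 'l) \<Rightarrow> real ^ 'n::enum \<Rightarrow> (real ^ 'n::enum) measure"
  assumes shs: "is_shs E Inv \<gamma> G R \<mu> w \<eta>"
    and defd: "shs_defined_in S E Inv \<gamma> G R"
    and delay: "\<forall>s. (finite (I_state E Inv \<gamma> G s) \<longrightarrow>
                       equiv_on (\<mu> s) (uniform_count_measure (I_state E Inv \<gamma> G s)) (I_state E Inv \<gamma> G s))
                   \<and> (infinite (I_state E Inv \<gamma> G s) \<longrightarrow>
                       equiv_on (\<mu> s) lborel (I_state E Inv \<gamma> G s))"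
    and reset: "\<forall>e\<in>E. \<forall>v. (finite (R e v) \<longrightarrow> equiv_on (\<eta> e v) (count_space UNIV) (R e v))
                   \<and> (infinite (R e v) \<longrightarrow> 0 < emeasure lborel (R e v) \<and> equiv_on (\<eta> e v) lborel (R e v))"
begin

lemma
  shows finite_edges: "finite E"
    and delay_measure: "prob_space (\<mu> s)" "sets (\<mu> s) = sets borel"
      "emeasure (\<mu> s) (I_state E Inv \<gamma> G s) = 1"
    and weight_pos_iff: "0 < w s e \<longleftrightarrow> enabled E G e s"
    and kernel_integrand_measurable:
      "D \<in> sets borel \<Longrightarrow> kernel_integrand E \<gamma> w \<eta> s l D \<in> borel_measurable borel"
  using shs unfolding is_shs_def by blast+

lemma reset_measure:
  assumes "e \<in> E"
  shows "prob_space (\<eta> e u)" "sets (\<eta> e u) = sets borel" "emeasure (\<eta> e u) (R e u) = 1"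
  using shs assms unfolding is_shs_def by blast+

lemma
  shows definable_flow: "{vlist v @ [t] @ vlist (\<gamma> l v t) |v t. 0 \<le> t} \<in> S (Suc CARD('n) + CARD('n))"
    and definable_Inv: "definable S (Inv l)"
    and definable_guard: "e \<in> E \<Longrightarrow> definable S (G e)"
    and definable_reset: "e \<in> E \<Longrightarrow> {vlist v @ vlist v' |v v'. v' \<in> R e v} \<in> S (CARD('n) + CARD('n))"
  using defd unfolding shs_defined_in_def by (simp_all add: mult_2)


lemma flow_pullback:
  assumes Q: "definable_rel S CARD('n) Q"
  shows "\<exists>F. definable_rel S (Suc CARD('n)) F \<and> (\<forall>v t. F (vlist v @ [t]) \<longleftrightarrow> 0 \<le> t \<and> Q (vlist (\<gamma> l v t)))"
proof -
  let ?\<Gamma> = "{vlist v @ [t] @ vlist (\<gamma> l v t) |v t. 0 \<le> t}"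
  let ?A = "{xs. length xs = CARD('n) \<and> Q xs}"
  have "definable_rel S (Suc CARD('n) + CARD('n)) (\<lambda>ws. ws \<in> ?\<Gamma> \<and> drop (Suc CARD('n)) ws \<in> ?A)"
    using Q by (intro definable_rel_conj definable_rel_mem definable_rel_drop definable_flow)
      (simp add: definable_rel_def)
  then have "definable_rel S (Suc CARD('n)) (\<lambda>zs. \<exists>ys. length ys = CARD('n) \<and>
      zs @ ys \<in> ?\<Gamma> \<and> drop (Suc CARD('n)) (zs @ ys) \<in> ?A)"
    by (rule definable_rel_ex_suffix)
  moreover have "(\<exists>ys. length ys = CARD('n) \<and> (vlist v @ [t]) @ ys \<in> ?\<Gamma> \<and>
      drop (Suc CARD('n)) ((vlist v @ [t]) @ ys) \<in> ?A) \<longleftrightarrow> 0 \<le> t \<and> Q (vlist (\<gamma> l v t))" for v t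
    by auto
  ultimately show ?thesis by blast
qed

lemma definable_flow_into:
  assumes "definable S X"
  shows "\<exists>F. definable_rel S (Suc CARD('n)) F \<and> (\<forall>v t. F (vlist v @ [t]) \<longleftrightarrow> 0 \<le> t \<and> \<gamma> l v t \<in> X)"
proof -
  have "definable_rel S CARD('n) (\<lambda>xs. xs \<in> vlist ` X)"
    using assms unfolding definable_def by (rule definable_rel_mem)
  from flow_pullback[OF this] show ?thesis by (simp add: image_iff)
qed

lemma definable_delay_set:
  "\<exists>F. definable_rel S (Suc CARD('n)) F \<and> (\<forall>v t. F (vlist v @ [t]) \<longleftrightarrow> t \<in> I_state E Inv \<gamma> G (l, v))"
proof -
  obtain FI where FI: "definable_rel S (Suc CARD('n)) FI"
      "\<And>v t. FI (vlist v @ [t]) \<longleftrightarrow> 0 \<le> t \<and> \<gamma> l v t \<in> Inv l"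
    using definable_flow_into[OF definable_Inv] by blast
  have "\<forall>e\<in>E. \<exists>F. definable_rel S (Suc CARD('n)) F \<and> (\<forall>v t. F (vlist v @ [t]) \<longleftrightarrow> 0 \<le> t \<and> \<gamma> l v t \<in> G e)"
    using definable_flow_into[OF definable_guard] by blast
  from bchoice[OF this] obtain FG where FG: "\<And>e. e \<in> E \<Longrightarrow> definable_rel S (Suc CARD('n)) (FG e)"
      "\<And>e v t. e \<in> E \<Longrightarrow> FG e (vlist v @ [t]) \<longleftrightarrow> 0 \<le> t \<and> \<gamma> l v t \<in> G e"
    by blast
  define FE where "FE e zs \<longleftrightarrow> (\<forall>x. 0 \<le> x \<and> x \<le> zs ! CARD('n) \<longrightarrow> FI (take CARD('n) zs @ [x])) \<and> FG e zs"
    for e zs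
  have "definable_rel S (Suc CARD('n)) (\<lambda>zs. \<exists>e\<in>{e \<in> E. src e = l}. FE e zs)"
    unfolding FE_def using finite_edges FI(1) FG(1)
    by (intro definable_rel_Bex_finite definable_rel_conj definable_rel_all_below_last) auto
  moreover have "FE e (vlist v @ [t]) \<longleftrightarrow> t \<in> I_edge Inv \<gamma> G (l, v) e" if "e \<in> E" for e v t
    using that FI(2) FG(2) unfolding FE_def I_edge_def by (auto simp: nth_append)
  ultimately show ?thesis
    unfolding I_state_def by (intro exI[of _ "\<lambda>zs. \<exists>e\<in>{e \<in> E. src e = l}. FE e zs"]) auto
qed

lemma reset_emeasure_pos_iff:
  assumes e: "e \<in> E" and D: "D \<in> sets borel"
  shows "0 < emeasure (\<eta> e u) D \<longleftrightarrow>
    (if 0 < emeasure lborel (R e u) then 0 < emeasure lborel (D \<inter> R e u) else D \<inter> R e u \<noteq> {})"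
proof -
  note \<eta> = reset_measure[OF e, of u]
  have "R e u \<in> sets borel"
    using \<eta>(2,3) emeasure_notin_sets[of "R e u" "\<eta> e u"] by auto
  then have DR: "D \<inter> R e u \<in> sets (\<eta> e u)" using D \<eta>(2) by simp
  have "emeasure (\<eta> e u) D = emeasure (\<eta> e u) (D \<inter> R e u)"
    using \<eta> \<open>R e u \<in> sets borel\<close> D by (intro emeasure_eq_inter_of_measure_one) auto
  moreover have "0 < emeasure (\<eta> e u) (D \<inter> R e u) \<longleftrightarrow> 0 < emeasure lborel (D \<inter> R e u)"
    if "0 < emeasure lborel (R e u)"
  proof -
    have "infinite (R e u)"
      using that by (auto simp: emeasure_lborel_countable countable_finite)
    then show ?thesis using reset e DR \<eta>(2) unfolding equiv_on_def by auto
  qed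
  moreover have "0 < emeasure (\<eta> e u) (D \<inter> R e u) \<longleftrightarrow> D \<inter> R e u \<noteq> {}"
    if "\<not> 0 < emeasure lborel (R e u)"
  proof -
    have "finite (R e u)" using that reset e by blast
    then show ?thesis
      using reset e DR by (intro equiv_on_count_space_emeasure_pos_iff[of _ "R e u"]) auto
  qed
  ultimately show ?thesis by simp
qed

lemma definable_reset_emeasure_pos:
  assumes e: "e \<in> E" and D: "D \<in> sets borel" "definable S D"
  shows "\<exists>Q. definable_rel S CARD('n) Q \<and> (\<forall>u. Q (vlist u) \<longleftrightarrow> 0 < emeasure (\<eta> e u) D)"
proof -
  let ?RR = "{vlist v @ vlist v' |v v'. v' \<in> R e v}"
  let ?RD = "\<lambda>zs. zs \<in> ?RR \<and> drop CARD('n) zs \<in> vlist ` D"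
  have RR: "vlist u @ vlist x \<in> ?RR \<longleftrightarrow> x \<in> R e u" for u x by auto
  have dRR: "definable_rel S (CARD('n) + CARD('n)) (\<lambda>zs. zs \<in> ?RR)"
    by (rule definable_rel_mem[OF definable_reset[OF e]])
  have dRD: "definable_rel S (CARD('n) + CARD('n)) ?RD"
    using D(2) unfolding definable_def by (intro definable_rel_conj dRR definable_rel_drop)
  obtain QR where QR: "definable_rel S CARD('n) QR" "\<And>p. length p = CARD('n) \<Longrightarrow>
      {x :: real ^ 'n::enum. p @ vlist x \<in> ?RR} \<in> sets borel \<Longrightarrow>
      QR p \<longleftrightarrow> 0 < emeasure lborel {x :: real ^ 'n::enum. p @ vlist x \<in> ?RR}"
    using definable_rel_emeasure_vec_fibre_pos[OF dRR] by blast
  obtain QD where QD: "definable_rel S CARD('n) QD" "\<And>p. length p = CARD('n) \<Longrightarrow>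
      {x :: real ^ 'n::enum. ?RD (p @ vlist x)} \<in> sets borel \<Longrightarrow>
      QD p \<longleftrightarrow> 0 < emeasure lborel {x :: real ^ 'n::enum. ?RD (p @ vlist x)}"
    using definable_rel_emeasure_vec_fibre_pos[OF dRD] by blast
  define Q where "Q zs \<longleftrightarrow> (QR zs \<and> QD zs) \<or> (\<not> QR zs \<and> (\<exists>ys. length ys = CARD('n) \<and> ?RD (zs @ ys)))"
    for zs
  have "definable_rel S CARD('n) Q"
    unfolding Q_def
    by (intro definable_rel_disj definable_rel_conj QR(1) QD(1) definable_rel_not definable_rel_ex_suffix dRD)
  moreover have "Q (vlist u) \<longleftrightarrow> 0 < emeasure (\<eta> e u) D" for u
  proof -
    have "R e u \<in> sets borel"
      using reset_measure[OF e, of u] emeasure_notin_sets[of "R e u" "\<eta> e u"] by auto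
    moreover have "{x. vlist u @ vlist x \<in> ?RR} = R e u" "{x. ?RD (vlist u @ vlist x)} = D \<inter> R e u"
      using RR by (auto simp: image_iff)
    moreover have "(\<exists>ys. length ys = CARD('n) \<and> ?RD (vlist u @ ys)) \<longleftrightarrow> D \<inter> R e u \<noteq> {}"
      using RR vlist_surj[where 'n='n] by (auto simp: image_iff) (metis length_vlist)
    ultimately show ?thesis
      using QR(2)[of "vlist u"] QD(2)[of "vlist u"] D(1)
      unfolding Q_def reset_emeasure_pos_iff[OF e D(1)] by auto
  qed
  ultimately show ?thesis by blast
qed

end

context definable_shs
begin

lemma kernel_integrand_pos_iff:
  "0 < kernel_integrand E \<gamma> w \<eta> (l, v) l' D t \<longleftrightarrow>
   (\<exists>e\<in>{e \<in> E. src e = l \<and> tgt e = l'}. \<gamma> l v t \<in> G e \<and> 0 < emeasure (\<eta> e (\<gamma> l v t)) D)"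
proof -
  have "0 < ennreal (w (l, \<gamma> l v t) e) * emeasure (\<eta> e (\<gamma> l v t)) D \<longleftrightarrow>
      \<gamma> l v t \<in> G e \<and> 0 < emeasure (\<eta> e (\<gamma> l v t)) D" if "e \<in> E" "src e = l" for e
    using that weight_pos_iff[of "(l, \<gamma> l v t)" e]
    by (auto simp: enabled_def zero_less_iff_neq_zero ennreal_eq_0_iff not_le)
  then show ?thesis
    using finite_edges unfolding kernel_integrand_def
    by (simp add: zero_less_iff_neq_zero sum_eq_0_iff) blast
qed

lemma definable_kernel_integrand_pos:
  assumes D: "D \<in> sets borel" "definable S D"
  shows "\<exists>F. definable_rel S (Suc CARD('n)) F \<and>
     (\<forall>v t. F (vlist v @ [t]) \<longleftrightarrow> 0 \<le> t \<and> 0 < kernel_integrand E \<gamma> w \<eta> (l, v) l' D t)"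
proof -
  have "\<forall>e\<in>E. \<exists>F. definable_rel S (Suc CARD('n)) F \<and> (\<forall>v t. F (vlist v @ [t]) \<longleftrightarrow>
      0 \<le> t \<and> \<gamma> l v t \<in> G e \<and> 0 < emeasure (\<eta> e (\<gamma> l v t)) D)"
  proof
    fix e assume e: "e \<in> E"
    obtain Q where Q: "definable_rel S CARD('n) Q" "\<And>u. Q (vlist u) \<longleftrightarrow> 0 < emeasure (\<eta> e u) D"
      using definable_reset_emeasure_pos[OF e D] by blast
    have "definable_rel S CARD('n) (\<lambda>xs. xs \<in> vlist ` G e \<and> Q xs)"
      using definable_guard[OF e] unfolding definable_def by (intro definable_rel_conj definable_rel_mem Q(1))
    from flow_pullback[OF this] show "\<exists>F. definable_rel S (Suc CARD('n)) F \<and> (\<forall>v t. F (vlist v @ [t]) \<longleftrightarrow>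
        0 \<le> t \<and> \<gamma> l v t \<in> G e \<and> 0 < emeasure (\<eta> e (\<gamma> l v t)) D)"
      by (simp add: image_iff Q(2))
  qed
  from bchoice[OF this] obtain FT where FT: "\<And>e. e \<in> E \<Longrightarrow> definable_rel S (Suc CARD('n)) (FT e)"
      "\<And>e v t. e \<in> E \<Longrightarrow> FT e (vlist v @ [t]) \<longleftrightarrow> 0 \<le> t \<and> \<gamma> l v t \<in> G e \<and> 0 < emeasure (\<eta> e (\<gamma> l v t)) D"
    by blast
  have "definable_rel S (Suc CARD('n)) (\<lambda>zs. \<exists>e\<in>{e \<in> E. src e = l \<and> tgt e = l'}. FT e zs)"
    using finite_edges FT(1) by (intro definable_rel_Bex_finite) auto
  moreover have "(\<exists>e\<in>{e \<in> E. src e = l \<and> tgt e = l'}. FT e (vlist v @ [t])) \<longleftrightarrow>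
      0 \<le> t \<and> 0 < kernel_integrand E \<gamma> w \<eta> (l, v) l' D t" for v t
    unfolding kernel_integrand_pos_iff using FT(2) by auto
  ultimately show ?thesis by blast
qed

lemma Pre_iff:
  fixes l l' :: 'l and v :: "real ^ 'n::enum" and D :: "(real ^ 'n::enum) set"
  assumes D: "D \<in> sets borel"
  defines "I \<equiv> I_state E Inv \<gamma> G (l, v)"
    and "T \<equiv> {t. 0 < kernel_integrand E \<gamma> w \<eta> (l, v) l' D t}"
  shows "(l, v) \<in> Pre E \<gamma> \<mu> w \<eta> l' D \<longleftrightarrow>
    (if finite I then T \<inter> I \<noteq> {} else 0 < emeasure lborel (T \<inter> I))"
proof -
  let ?M = "\<mu> (l, v)"
  note \<mu> = delay_measure[of "(l, v)", folded I_def]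
  have f: "kernel_integrand E \<gamma> w \<eta> (l, v) l' D \<in> borel_measurable ?M"
    using kernel_integrand_measurable[OF D] measurable_cong_sets[OF \<mu>(2) refl] by blast
  have T: "T = {t \<in> space ?M. kernel_integrand E \<gamma> w \<eta> (l, v) l' D t \<noteq> 0}"
    unfolding T_def using sets_eq_imp_space_eq[OF \<mu>(2)] by (auto simp: zero_less_iff_neq_zero)
  have TM: "T \<in> sets ?M" unfolding T using f by measurable
  have IM: "I \<in> sets ?M"
    using \<mu>(3) emeasure_notin_sets[of I ?M] by auto
  have "(l, v) \<in> Pre E \<gamma> \<mu> w \<eta> l' D \<longleftrightarrow> 0 < emeasure ?M T"
    unfolding Pre_def shs_kernel_def mem_Collect_eq T
    using nn_integral_0_iff[OF f] by (simp add: zero_less_iff_neq_zero)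
  also have "emeasure ?M T = emeasure ?M (T \<inter> I)"
    by (rule emeasure_eq_inter_of_measure_one[OF \<mu>(1) IM \<mu>(3) TM])
  also have "0 < \<dots> \<longleftrightarrow> (if finite I then T \<inter> I \<noteq> {} else 0 < emeasure lborel (T \<inter> I))"
  proof (cases "finite I")
    case True
    then have "equiv_on ?M (uniform_count_measure I) I" using delay unfolding I_def by blast
    moreover have "T \<inter> I \<in> sets ?M" using TM IM by blast
    ultimately show ?thesis
      using equiv_on_uniform_count_measure_emeasure_pos_iff[of ?M I "T \<inter> I"] True by simp
  next
    case False
    then have "equiv_on ?M lborel I" using delay unfolding I_def by blast
    then show ?thesis using False TM IM \<mu>(2) unfolding equiv_on_def by auto
  qed
  finally show ?thesis .
qed

lemma Pre_non_borel: "D \<notin> sets borel \<Longrightarrow> Pre E \<gamma> \<mu> w \<eta> l' D = {}"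
proof -
  assume "D \<notin> sets borel"
  then have "emeasure (\<eta> e u) D = 0" if "e \<in> E" for e u
    using reset_measure(2)[OF that] by (simp add: emeasure_notin_sets)
  then show ?thesis
    unfolding Pre_def shs_kernel_def kernel_integrand_def by simp
qed

lemma definable_Pre_slice:
  assumes D: "definable S D"
  shows "definable S {v. (l, v) \<in> Pre E \<gamma> \<mu> w \<eta> l' D}"
proof (cases "D \<in> sets borel")
  case False
  then show ?thesis
    using Pre_non_borel real_structure_empty[OF real_structure] by (simp add: definable_def)
next
  case True
  obtain FI where FI: "definable_rel S (Suc CARD('n)) FI"
      "\<And>v t. FI (vlist v @ [t]) \<longleftrightarrow> t \<in> I_state E Inv \<gamma> G (l, v)"
    using definable_delay_set by blast
  obtain FT where FT: "definable_rel S (Suc CARD('n)) FT"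
      "\<And>v t. FT (vlist v @ [t]) \<longleftrightarrow> 0 \<le> t \<and> 0 < kernel_integrand E \<gamma> w \<eta> (l, v) l' D t"
    using definable_kernel_integrand_pos[OF True D] by blast
  define W where "W zs \<longleftrightarrow> FT zs \<and> FI zs" for zs
  have W: "definable_rel S (Suc CARD('n)) W" unfolding W_def by (intro definable_rel_conj FI(1) FT(1))
  define P where "P xs \<longleftrightarrow> (if has_interval {x. FI (xs @ [x])} then has_interval {x. W (xs @ [x])}
      else (\<exists>x. W (xs @ [x])))" for xs
  have dP: "definable_rel S CARD('n) P"
    unfolding P_def if_bool_eq_disj
    by (intro definable_rel_disj definable_rel_conj definable_rel_not definable_rel_has_interval
        definable_rel_ex_last FI(1) W)
  have "v \<in> {v. (l, v) \<in> Pre E \<gamma> \<mu> w \<eta> l' D} \<longleftrightarrow> P (vlist v)" for v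
  proof -
    let ?I = "I_state E Inv \<gamma> G (l, v)"
    let ?T = "{t. 0 < kernel_integrand E \<gamma> w \<eta> (l, v) l' D t}"
    have I: "{x. FI (vlist v @ [x])} = ?I" using FI(2) by auto
    have TI: "{x. W (vlist v @ [x])} = ?T \<inter> ?I"
      unfolding W_def using FI(2) FT(2) by (auto simp: I_state_def I_edge_def)
    then have "(\<exists>x. W (vlist v @ [x])) \<longleftrightarrow> ?T \<inter> ?I \<noteq> {}" by blast
    have "has_interval ?I \<longleftrightarrow> infinite ?I"
      using fin_union_pts_intervals_infinite_iff[OF o_minimal_fibre[OF FI(1)], of "vlist v"] I by simp
    moreover have "has_interval (?T \<inter> ?I) \<longleftrightarrow> 0 < emeasure lborel (?T \<inter> ?I)"
      using fin_union_pts_intervals_emeasure_pos_iff[OF o_minimal_fibre[OF W], of "vlist v"] TI by simp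
    ultimately show ?thesis
      unfolding mem_Collect_eq Pre_iff[OF True] P_def I TI \<open>(\<exists>x. W (vlist v @ [x])) \<longleftrightarrow> ?T \<inter> ?I \<noteq> {}\<close>
      by simp
  qed
  from definable_iff_definable_rel[OF this] dP show ?thesis by simp
qed

end

theorem mainTheorem12:
  fixes S :: "nat \<Rightarrow> real list set set"
    and E :: "('l::finite \<times> 'a \<times> 'l) set"
    and Inv :: "'l \<Rightarrow> (real ^ 'n::enum) set"
    and \<gamma> :: "'l \<Rightarrow> real ^ 'n::enum \<Rightarrow> real \<Rightarrow> real ^ 'n::enum"
    and G :: "('l \<times> 'a \<times> 'l) \<Rightarrow> (real ^ 'n::enum) set"
    and R :: "('l \<times> 'a \<times> 'l) \<Rightarrow> real ^ 'n::enum \<Rightarrow> (real ^ 'n::enum) set"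
    and \<mu> :: "'l \<times> (real ^ 'n::enum) \<Rightarrow> real measure"
    and w :: "'l \<times> (real ^ 'n::enum) \<Rightarrow> ('l \<times> 'a \<times> 'l) \<Rightarrow> real"
    and \<eta> :: "('l \<times> 'a \<times> 'l) \<Rightarrow> real ^ 'n::enum \<Rightarrow> (real ^ 'n::enum) measure"
  assumes omin: "o_minimal S"
    and shs: "is_shs E Inv \<gamma> G R \<mu> w \<eta>"
    and defd: "shs_defined_in S E Inv \<gamma> G R"
    and delay: "\<forall>s. (finite (I_state E Inv \<gamma> G s) \<longrightarrow>
                       equiv_on (\<mu> s) (uniform_count_measure (I_state E Inv \<gamma> G s)) (I_state E Inv \<gamma> G s))
                   \<and> (infinite (I_state E Inv \<gamma> G s) \<longrightarrow>
                       equiv_on (\<mu> s) lborel (I_state E Inv \<gamma> G s))"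
    and reset: "\<forall>e\<in>E. \<forall>v. (finite (R e v) \<longrightarrow> equiv_on (\<eta> e v) (count_space UNIV) (R e v))
                   \<and> (infinite (R e v) \<longrightarrow> 0 < emeasure lborel (R e v) \<and> equiv_on (\<eta> e v) lborel (R e v))"
  shows "\<forall>l D. definable S D \<longrightarrow> definable_states S (Pre E \<gamma> \<mu> w \<eta> l D)"
proof -
  interpret definable_shs S E Inv \<gamma> G R \<mu> w \<eta>
    by unfold_locales fact+
  show ?thesis
    unfolding definable_states_def using definable_Pre_slice by blast
qed

end
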